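(* Let $k_1,k_2$ be constants with $0<k_2\le 1$ and $8k_2^2+6k_1-3<0$. Let $J'=(z_w,z_w')$ be a nonempty open interval, let $r:J'\to\mathbb{R}$ be differentiable with $r(z)\neq 0$, $\dot r(z)<k_1$ and $|r(z)|<k_2$ for all $z\in J'$, and let $h:J'\to\mathbb{R}$ be differentiable with $\dot h(z)=1+h(z)^2-2r(z)h(z)$ on $J'$, having exactly one zero $z_*\in J'$. Let $G(z)=z-\dfrac{2h(z)}{2+h(z)^2-2r(z)h(z)}$. Then for every initial guess $z_0\in J'$ the iteration $z_{n+1}=G(z_n)$ is well defined and $(z_n)$ converges monotonically to $z_*$.
   Context: $\dot{}$ denotes differentiation with respect to $z$. "Converges monotonically" means all iterates lie in $J'$, the sequence is monotone, and its limit is $z_*$. *)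

theory Defs
  imports "HOL-Analysis.Analysis"
begin

end

(*
  G is a damped Newton map for h: G z = z - 2 h / (1 + h'), using the Riccati equation
  h' = 1 + h^2 - 2 r h.  Since |r| < 1, h' > 0, so h is increasing and vanishes only at z*;
  hence G z - z has the sign of z* - z.  Differentiating, G' = h^2 Q / (1 + h')^2 with
  3 Q = (3 h - 4 r)^2 + 6 - 4 r^2 - 12 r', which the bounds on r and r' make positive.
  So G is increasing with unique fixed point z*, the iterates stay on the side of z* where
  they start and move monotonically towards it, and the limit is a fixed point, i.e. z*.
*)
theory Submission
  imports Defs
begin

lemma mono_on_interval_of_deriv_nonneg:
  fixes f f' :: "real \<Rightarrow> real"
  assumes "is_interval S"
    and "\<And>x. x \<in> S \<Longrightarrow> (f has_real_derivative f' x) (at x)"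
    and "\<And>x. x \<in> S \<Longrightarrow> 0 \<le> f' x"
  shows "mono_on S f"
proof (rule mono_onI)
  fix x y assume "x \<in> S" "y \<in> S" "x \<le> y"
  then have "t \<in> S" if "x \<le> t" "t \<le> y" for t
    using \<open>is_interval S\<close> that unfolding is_interval_1 by blast
  then show "f x \<le> f y"
    using \<open>x \<le> y\<close> assms(2,3) by (blast intro: DERIV_nonneg_imp_nondecreasing)
qed

lemma monotone_iterates_tendsto_fixpoint:
  fixes G :: "real \<Rightarrow> real"
  assumes cont: "continuous_on {c..d} G"
    and bounded: "\<And>n. (G ^^ n) z0 \<in> {c..d}"
    and monotone: "mono (\<lambda>n. (G ^^ n) z0) \<or> antimono (\<lambda>n. (G ^^ n) z0)"
  obtains L where "L \<in> {c..d}" "G L = L" "(\<lambda>n. (G ^^ n) z0) \<longlonglongrightarrow> L"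
proof -
  let ?x = "\<lambda>n. (G ^^ n) z0"
  have "Bseq ?x"
    unfolding Bseq_eq_bounded using bounded
    by (intro bounded_subset[OF bounded_closed_interval[of c d]]) auto
  then have "convergent ?x"
    using monotone by (intro Bseq_monoseq_convergent) (auto simp: monoseq_iff)
  then obtain L where lim: "?x \<longlonglongrightarrow> L"
    by (auto simp: convergent_def)
  have L: "L \<in> {c..d}"
    using closed_sequentially[OF closed_atLeastAtMost bounded lim] .
  have "(\<lambda>n. G (?x n)) \<longlonglongrightarrow> G L"
    using bounded by (intro continuous_on_tendsto_compose[OF cont lim L]) auto
  moreover have "(\<lambda>n. G (?x n)) \<longlonglongrightarrow> L"
    using LIMSEQ_Suc[OF lim] by simp
  ultimately have "G L = L"
    by (rule LIMSEQ_unique)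
  with L lim show thesis
    using that by blast
qed

lemma iterates_converge_monotonically:
  fixes G :: "real \<Rightarrow> real" and S :: "real set"
  assumes S: "is_interval S"
    and cont: "continuous_on S G" and mono: "mono_on S G"
    and zs: "zs \<in> S" "G zs = zs"
    and fixpoint_unique: "\<And>z. z \<in> S \<Longrightarrow> G z = z \<Longrightarrow> z = zs"
    and step_above: "\<And>z. z \<in> S \<Longrightarrow> zs \<le> z \<Longrightarrow> G z \<le> z"
    and step_below: "\<And>z. z \<in> S \<Longrightarrow> z \<le> zs \<Longrightarrow> z \<le> G z"
    and z0: "z0 \<in> S"
  shows "(\<forall>n. (G ^^ n) z0 \<in> S)
         \<and> (mono (\<lambda>n. (G ^^ n) z0) \<or> antimono (\<lambda>n. (G ^^ n) z0))
         \<and> (\<lambda>n. (G ^^ n) z0) \<longlonglongrightarrow> zs"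
proof -
  let ?x = "\<lambda>n. (G ^^ n) z0"
  have interval: "{a..b} \<subseteq> S" if "a \<in> S" "b \<in> S" for a b
    using S that unfolding is_interval_1 by (meson atLeastAtMost_iff subsetI)
  show ?thesis
  proof (cases "zs \<le> z0")
    case True
    have x_in: "?x n \<in> {zs..z0}" for n
    proof (induction n)
      case (Suc n)
      then have "?x n \<in> S"
        using interval[OF zs(1) z0] by blast
      then have "zs \<le> G (?x n)" "G (?x n) \<le> ?x n"
        using mono_onD[OF mono zs(1)] zs(2) step_above Suc.IH by simp_all
      then show ?case
        using Suc.IH by simp
    qed (use True in simp)
    then have x_S: "?x n \<in> S" for n
      using interval[OF zs(1) z0] by blast
    have "antimono ?x"
      by (rule decseq_SucI) (use x_in x_S step_above in simp)
    moreover obtain L where "L \<in> {zs..z0}" "G L = L" "?x \<longlonglongrightarrow> L"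
      using monotone_iterates_tendsto_fixpoint[OF continuous_on_subset[OF cont interval[OF zs(1) z0]] x_in]
        \<open>antimono ?x\<close> by blast
    moreover have "L = zs"
      using \<open>L \<in> {zs..z0}\<close> interval[OF zs(1) z0] \<open>G L = L\<close> fixpoint_unique by blast
    ultimately show ?thesis
      using x_S by simp
  next
    case False
    have x_in: "?x n \<in> {z0..zs}" for n
    proof (induction n)
      case (Suc n)
      then have "?x n \<in> S"
        using interval[OF z0 zs(1)] by blast
      then have "G (?x n) \<le> zs" "?x n \<le> G (?x n)"
        using mono_onD[OF mono _ zs(1)] zs(2) step_below Suc.IH by simp_all
      then show ?case
        using Suc.IH by simp
    qed (use False in simp)
    then have x_S: "?x n \<in> S" for n
      using interval[OF z0 zs(1)] by blast
    have "mono ?x"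
      by (rule incseq_SucI) (use x_in x_S step_below in simp)
    moreover obtain L where "L \<in> {z0..zs}" "G L = L" "?x \<longlonglongrightarrow> L"
      using monotone_iterates_tendsto_fixpoint[OF continuous_on_subset[OF cont interval[OF z0 zs(1)]] x_in]
        \<open>mono ?x\<close> by blast
    moreover have "L = zs"
      using \<open>L \<in> {z0..zs}\<close> interval[OF z0 zs(1)] \<open>G L = L\<close> fixpoint_unique by blast
    ultimately show ?thesis
      using x_S by simp
  qed
qed

lemma newton_type_iterates_converge_monotonically:
  fixes G h c :: "real \<Rightarrow> real" and S :: "real set"
  assumes S: "is_interval S"
    and cont: "continuous_on S G" and mono: "mono_on S G"
    and G_eq: "\<And>z. z \<in> S \<Longrightarrow> G z = z - h z / c z"
    and c_pos: "\<And>z. z \<in> S \<Longrightarrow> 0 < c z"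
    and h_mono: "mono_on S h"
    and zs: "zs \<in> S" "h zs = 0"
    and zero_unique: "\<And>z. z \<in> S \<Longrightarrow> h z = 0 \<Longrightarrow> z = zs"
    and z0: "z0 \<in> S"
  shows "(\<forall>n. (G ^^ n) z0 \<in> S)
         \<and> (mono (\<lambda>n. (G ^^ n) z0) \<or> antimono (\<lambda>n. (G ^^ n) z0))
         \<and> (\<lambda>n. (G ^^ n) z0) \<longlonglongrightarrow> zs"
proof (rule iterates_converge_monotonically[OF S cont mono zs(1) _ _ _ _ z0])
  show "G zs = zs"
    using G_eq zs by simp
  show "z = zs" if "z \<in> S" "G z = z" for z
    using that G_eq c_pos[OF that(1)] zero_unique by simp
  show "G z \<le> z" if "z \<in> S" "zs \<le> z" for z
    using mono_onD[OF h_mono zs(1) that] zs(2) G_eq c_pos that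
    by (simp add: divide_nonneg_pos)
  show "z \<le> G z" if "z \<in> S" "z \<le> zs" for z
    using mono_onD[OF h_mono that(1) zs(1) that(2)] zs(2) G_eq c_pos that
    by (simp add: divide_nonpos_pos)
qed

lemma riccati_rhs_pos:
  fixes h r :: real
  assumes "\<bar>r\<bar> < 1"
  shows "0 < 1 + h^2 - 2 * r * h"
proof -
  have "r^2 < 1"
    using assms by (simp add: abs_square_less_1)
  moreover have "1 + h^2 - 2 * r * h = (h - r)^2 + (1 - r^2)"
    by (simp add: power2_eq_square algebra_simps)
  ultimately show ?thesis
    by (smt (verit) zero_le_power2)
qed

lemma riccati_newton_quadratic_pos:
  fixes k1 k2 h r r' :: real
  assumes "\<bar>r\<bar> < k2" and "r' < k1" and "8 * k2^2 + 6 * k1 - 3 < 0"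
  shows "0 < 3 * h^2 - 8 * r * h + 4 * r^2 + 2 - 4 * r'"
proof -
  have "r^2 < k2^2"
    using assms(1) by (metis abs_ge_zero power2_abs power_strict_mono zero_less_numeral)
  moreover have "3 * (3 * h^2 - 8 * r * h + 4 * r^2 + 2 - 4 * r')
      = (3 * h - 4 * r)^2 + 6 - 4 * r^2 - 12 * r'"
    by (simp add: power2_eq_square algebra_simps)
  ultimately show ?thesis
    using assms(2,3) by (smt (verit) zero_le_power2)
qed

lemma riccati_newton_map_has_derivative:
  fixes h r :: "real \<Rightarrow> real"
  assumes h': "(h has_real_derivative 1 + (h z)^2 - 2 * r z * h z) (at z)"
    and r': "(r has_real_derivative r') (at z)"
    and nz: "2 + (h z)^2 - 2 * r z * h z \<noteq> 0"
  shows "((\<lambda>z. z - 2 * h z / (2 + (h z)^2 - 2 * r z * h z)) has_real_derivative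
           (h z)^2 * (3 * (h z)^2 - 8 * r z * h z + 4 * (r z)^2 + 2 - 4 * r')
             / (2 + (h z)^2 - 2 * r z * h z)^2) (at z)"
proof -
  define D where "D = 1 + (h z)^2 - 2 * r z * h z"
  define N' where "N' = 2 * h z * D - 2 * (r' * h z + r z * D)"
  have N: "2 + (h z)^2 - 2 * r z * h z = 1 + D"
    by (simp add: D_def)
  have "((\<lambda>z. z - 2 * h z / (2 + (h z)^2 - 2 * r z * h z)) has_real_derivative
          1 - (2 * D * (1 + D) - 2 * h z * N') / (1 + D)^2) (at z)"
    using nz unfolding D_def N'_def
    by (auto intro!: derivative_eq_intros h' r' simp: power2_eq_square algebra_simps)
  moreover have "1 - (2 * D * (1 + D) - 2 * h z * N') / (1 + D)^2
      = ((1 + D)^2 - (2 * D * (1 + D) - 2 * h z * N')) / (1 + D)^2"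
    using nz unfolding N by (simp add: field_simps)
  moreover have "(1 + D)^2 - (2 * D * (1 + D) - 2 * h z * N')
      = (h z)^2 * (3 * (h z)^2 - 8 * r z * h z + 4 * (r z)^2 + 2 - 4 * r')"
    by (simp add: D_def N'_def power2_eq_square algebra_simps)
  ultimately show ?thesis
    unfolding N by simp
qed

theorem mainTheorem8:
  fixes k1 k2 zw zw' zs :: real
    and r r' h G :: "real \<Rightarrow> real"
  assumes k2_pos: "0 < k2" and k2_le: "k2 \<le> 1"
    and k_cond: "8 * k2^2 + 6 * k1 - 3 < 0"
    and J_ne: "zw < zw'"
    and r_deriv: "\<forall>z\<in>{zw<..<zw'}. (r has_real_derivative r' z) (at z)"
    and r_nz: "\<forall>z\<in>{zw<..<zw'}. r z \<noteq> 0"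
    and r'_bound: "\<forall>z\<in>{zw<..<zw'}. r' z < k1"
    and r_bound: "\<forall>z\<in>{zw<..<zw'}. \<bar>r z\<bar> < k2"
    and h_deriv: "\<forall>z\<in>{zw<..<zw'}.
                    (h has_real_derivative (1 + (h z)^2 - 2 * r z * h z)) (at z)"
    and zs_in: "zs \<in> {zw<..<zw'}" and h_zs: "h zs = 0"
    and zs_unique: "\<forall>z\<in>{zw<..<zw'}. h z = 0 \<longrightarrow> z = zs"
    and G_def: "G = (\<lambda>z. z - 2 * h z / (2 + (h z)^2 - 2 * r z * h z))"
  shows "\<forall>z0\<in>{zw<..<zw'}.
           (\<forall>n. (G ^^ n) z0 \<in> {zw<..<zw'} \<and>
                 2 + (h ((G ^^ n) z0))^2 - 2 * r ((G ^^ n) z0) * h ((G ^^ n) z0) \<noteq> 0)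
         \<and> (mono (\<lambda>n. (G ^^ n) z0) \<or> antimono (\<lambda>n. (G ^^ n) z0))
         \<and> (\<lambda>n. (G ^^ n) z0) \<longlonglongrightarrow> zs"
proof -
  let ?J = "{zw<..<zw'}"
  let ?N = "\<lambda>z. 2 + (h z)^2 - 2 * r z * h z"
  have h'_pos: "0 < 1 + (h z)^2 - 2 * r z * h z" if "z \<in> ?J" for z
    using riccati_rhs_pos r_bound k2_le that by force
  then have N_pos: "0 < ?N z" if "z \<in> ?J" for z
    using that by force
  have G_deriv: "(G has_real_derivative
      (h z)^2 * (3 * (h z)^2 - 8 * r z * h z + 4 * (r z)^2 + 2 - 4 * r' z) / (?N z)^2) (at z)"
    if "z \<in> ?J" for z
    unfolding G_def using that h_deriv r_deriv N_pos[OF that]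
    by (intro riccati_newton_map_has_derivative) auto
  have h_mono: "mono_on ?J h"
    using h_deriv h'_pos
    by (intro mono_on_interval_of_deriv_nonneg[OF is_interval_oo]) (auto intro: less_imp_le)
  have G_cont: "continuous_on ?J G"
    using G_deriv by (meson DERIV_isCont continuous_at_imp_continuous_on)
  have G_mono: "mono_on ?J G"
  proof (rule mono_on_interval_of_deriv_nonneg[OF is_interval_oo G_deriv])
    fix z assume "z \<in> ?J"
    then have "0 < 3 * (h z)^2 - 8 * r z * h z + 4 * (r z)^2 + 2 - 4 * r' z"
      using riccati_newton_quadratic_pos r_bound r'_bound k_cond by blast
    then show "0 \<le> (h z)^2 * (3 * (h z)^2 - 8 * r z * h z + 4 * (r z)^2 + 2 - 4 * r' z) / (?N z)^2"
      by simp
  qed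
  have G_eq: "G z = z - h z / (?N z / 2)" for z
    unfolding G_def by simp
  have half_N_pos: "0 < ?N z / 2" if "z \<in> ?J" for z
    using N_pos[OF that] by simp
  note iterates = newton_type_iterates_converge_monotonically[OF is_interval_oo G_cont G_mono
      G_eq half_N_pos h_mono zs_in h_zs zs_unique[rule_format]]
  have "\<forall>z\<in>?J. ?N z \<noteq> 0"
    using N_pos by force
  with iterates show ?thesis
    by blast
qed

end
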